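(* Let $r_n:=|\mathfrak{A}_{2n+1}(2413,3142)|$ for $n\ge0$ and $R(x):=\sum_{n\ge1}r_nx^n$. Then $$R(x)=x(R(x)+1)^2+x(R(x)+1)^3.$$ Consequently $r_0=1$ and for $n\ge1$, $$r_n=\frac{2}{n}\sum_{i=0}^{n-1}2^i\binom{2n}{i}\binom{n}{i+1}.$$
   Context: $\mathfrak{A}_m(2413,3142)$ is the set of permutations $\pi$ of $[m]$ that are alternating (up-down), i.e. $\pi(1)<\pi(2)>\pi(3)<\pi(4)>\cdots$, and avoid both classical patterns $2413$ and $3142$. *)

theory Defs
  imports "HOL-Combinatorics.Permutations" "HOL-Computational_Algebra.Formal_Power_Series"
begin

definition alternating :: "nat \<Rightarrow> (nat \<Rightarrow> nat) \<Rightarrow> bool" where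
  "alternating m p \<longleftrightarrow>
     (\<forall>i. 1 \<le> i \<and> i < m \<longrightarrow> (if odd i then p i < p (Suc i) else p i > p (Suc i)))"

definition contains_pattern :: "nat \<Rightarrow> (nat \<Rightarrow> nat) \<Rightarrow> nat list \<Rightarrow> bool" where
  "contains_pattern m p tau \<longleftrightarrow>
     (\<exists>f :: nat \<Rightarrow> nat. strict_mono_on {..<length tau} f \<and> f ` {..<length tau} \<subseteq> {1..m} \<and>
        (\<forall>a < length tau. \<forall>b < length tau. p (f a) < p (f b) \<longleftrightarrow> tau ! a < tau ! b))"

definition Alt_avoid :: "nat \<Rightarrow> (nat \<Rightarrow> nat) set" where
  "Alt_avoid m = {p. p permutes {1..m} \<and> alternating m p \<and>
      \<not> contains_pattern m p [2,4,1,3] \<and> \<not> contains_pattern m p [3,1,4,2]}"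

definition r_seq :: "nat \<Rightarrow> nat" where
  "r_seq n = card (Alt_avoid (2 * n + 1))"

definition R_fps :: "int fps" where
  "R_fps = Abs_fps (\<lambda>n. if n = 0 then 0 else int (r_seq n))"

end

theory Submission
  imports Defs "HOL-Combinatorics.Multiset_Permutations"
begin

text \<open>
  An alternating permutation avoids 2413 and 3142 iff its one-line list is separable.
  A separable sequence of length at least two is a direct or a skew sum, and complementation
  exchanges the two while swapping up-down and down-up. Cutting a direct sum at its first split
  point into a direct-indecomposable prefix and an arbitrary suffix gives convolution
  recurrences for the numbers of alternating separable permutations, sorted by the parity of
  the length and of the first step. For the six resulting generating series this is a
  polynomial system, whose elimination gives \<open>A = 1 + x A\<^sup>2 + x A\<^sup>3\<close> for the odd lengths,
  \<open>A = R + 1\<close>. Lagrange inversion with \<open>\<phi> = (1 + x)\<^sup>2 (2 + x)\<close> then yields the coefficients.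
\<close>

section \<open>Separable sequences\<close>

text \<open>The two forbidden configurations are occurrences of 2413 and 3142.\<close>

definition separable :: "nat list \<Rightarrow> bool" where
  "separable xs \<longleftrightarrow> (\<forall>i j k l. i < j \<longrightarrow> j < k \<longrightarrow> k < l \<longrightarrow> l < length xs \<longrightarrow>
      \<not> (xs!k < xs!i \<and> xs!i < xs!l \<and> xs!l < xs!j) \<and> \<not> (xs!j < xs!l \<and> xs!l < xs!i \<and> xs!i < xs!k))"

definition direct_split :: "nat list \<Rightarrow> nat \<Rightarrow> bool" where
  "direct_split xs k \<longleftrightarrow> 0 < k \<and> k < length xs \<and>
     (\<forall>i j. i < k \<longrightarrow> k \<le> j \<longrightarrow> j < length xs \<longrightarrow> xs!i < xs!j)"

definition skew_split :: "nat list \<Rightarrow> nat \<Rightarrow> bool" where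
  "skew_split xs k \<longleftrightarrow> 0 < k \<and> k < length xs \<and>
     (\<forall>i j. i < k \<longrightarrow> k \<le> j \<longrightarrow> j < length xs \<longrightarrow> xs!j < xs!i)"

definition direct_decomposable :: "nat list \<Rightarrow> bool" where
  "direct_decomposable xs \<longleftrightarrow> (\<exists>k. direct_split xs k)"

definition skew_decomposable :: "nat list \<Rightarrow> bool" where
  "skew_decomposable xs \<longleftrightarrow> (\<exists>k. skew_split xs k)"

definition complement :: "nat \<Rightarrow> nat list \<Rightarrow> nat list" where
  "complement M xs = map (\<lambda>v. M - Suc v) xs"

lemma separable_embedding:
  assumes sep: "separable xs" and f_bound: "\<forall>i<length ys. f i < length xs"
    and f_mono: "\<forall>i j. i < j \<longrightarrow> j < length ys \<longrightarrow> f i < f j"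
    and f_order: "\<forall>i<length ys. \<forall>j<length ys. ys!i < ys!j \<longleftrightarrow> xs!(f i) < xs!(f j)"
  shows "separable ys"
  unfolding separable_def
proof (intro allI impI)
  fix i j k l assume h: "i < j" "j < k" "k < l" "l < length ys"
  have "f i < f j" "f j < f k" "f k < f l" "f l < length xs" using h f_bound f_mono by auto
  hence "\<not> (xs!f k < xs!f i \<and> xs!f i < xs!f l \<and> xs!f l < xs!f j) \<and>
      \<not> (xs!f j < xs!f l \<and> xs!f l < xs!f i \<and> xs!f i < xs!f k)"
    using sep unfolding separable_def by blast
  thus "\<not> (ys!k < ys!i \<and> ys!i < ys!l \<and> ys!l < ys!j) \<and> \<not> (ys!j < ys!l \<and> ys!l < ys!i \<and> ys!i < ys!k)"
    using f_order h by simp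
qed

lemma separable_take: "separable xs \<Longrightarrow> separable (take k xs)"
  by (rule separable_embedding[where f = id]) auto

lemma separable_drop: "separable xs \<Longrightarrow> separable (drop k xs)"
  by (rule separable_embedding[where f = "\<lambda>i. i + k"]) (auto simp: add.commute)

lemma separable_map_strict_mono:
  "strict_mono_on (set xs) f \<Longrightarrow> separable xs \<Longrightarrow> separable (map f xs)"
  by (rule separable_embedding[where f = id]) (auto simp: strict_mono_on_less)

lemma length_complement [simp]: "length (complement M xs) = length xs"
  by (simp add: complement_def)

lemma complement_less_iff:
  assumes "\<forall>v\<in>set xs. v < M" and "i < length xs" and "j < length xs"
  shows "complement M xs ! i < complement M xs ! j \<longleftrightarrow> xs ! j < xs ! i"
proof -
  have "xs ! i < M" "xs ! j < M" using assms by auto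
  thus ?thesis using assms(2,3) by (auto simp: complement_def)
qed

lemma complement_bound: "\<forall>v\<in>set xs. v < M \<Longrightarrow> \<forall>v\<in>set (complement M xs). v < M"
  by (auto simp: complement_def)

lemma complement_complement: "\<forall>v\<in>set xs. v < M \<Longrightarrow> complement M (complement M xs) = xs"
  unfolding complement_def by (auto intro!: map_idI)

lemma separable_complement:
  assumes bound: "\<forall>v\<in>set xs. v < M" and sep: "separable xs"
  shows "separable (complement M xs)"
  unfolding separable_def length_complement
proof (intro allI impI)
  fix i j k l assume h: "i < j" "j < k" "k < l" "l < length xs"
  hence "\<not> (xs!k < xs!i \<and> xs!i < xs!l \<and> xs!l < xs!j) \<and> \<not> (xs!j < xs!l \<and> xs!l < xs!i \<and> xs!i < xs!k)"
    using sep unfolding separable_def by blast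
  moreover have "i < length xs" "j < length xs" "k < length xs" using h by auto
  ultimately show "\<not> (complement M xs!k < complement M xs!i \<and> complement M xs!i < complement M xs!l \<and>
        complement M xs!l < complement M xs!j) \<and>
      \<not> (complement M xs!j < complement M xs!l \<and> complement M xs!l < complement M xs!i \<and>
        complement M xs!i < complement M xs!k)"
    using h(4) bound by (simp add: complement_less_iff) blast
qed

lemma separable_complement_iff:
  assumes "\<forall>v\<in>set xs. v < M"
  shows "separable (complement M xs) \<longleftrightarrow> separable xs"
  using separable_complement[OF assms] separable_complement[OF complement_bound[OF assms]]
    complement_complement[OF assms] by auto

lemma distinct_complement_iff:
  assumes "\<forall>v\<in>set xs. v < M"
  shows "distinct (complement M xs) \<longleftrightarrow> distinct xs"
proof -
  have "inj_on (\<lambda>v. M - Suc v) (set xs)"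
  proof (rule inj_onI)
    fix a b assume "a \<in> set xs" "b \<in> set xs" "M - Suc a = M - Suc b"
    moreover have "a < M" "b < M" using assms \<open>a \<in> set xs\<close> \<open>b \<in> set xs\<close> by auto
    ultimately show "a = b" by arith
  qed
  thus ?thesis by (simp add: complement_def distinct_map)
qed

lemma skew_split_complement_iff:
  assumes "\<forall>v\<in>set xs. v < M"
  shows "skew_split (complement M xs) k \<longleftrightarrow> direct_split xs k"
  using assms unfolding skew_split_def direct_split_def by (auto simp: complement_less_iff)

lemma direct_split_complement_iff:
  assumes "\<forall>v\<in>set xs. v < M"
  shows "direct_split (complement M xs) k \<longleftrightarrow> skew_split xs k"
  using assms unfolding skew_split_def direct_split_def by (auto simp: complement_less_iff)

lemma not_direct_and_skew_split:
  assumes "direct_split xs k" and "skew_split xs k'"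
  shows False
proof -
  have "xs ! 0 < xs ! (length xs - 1)" using assms(1) by (auto simp: direct_split_def)
  moreover have "xs ! (length xs - 1) < xs ! 0" using assms(2) by (auto simp: skew_split_def)
  ultimately show False by simp
qed

lemma direct_split_snoc_above_upward_closed:
  assumes dist: "distinct (ys @ [x])" and sep: "separable (ys @ [x])" and split: "direct_split ys k"
    and "h < l" "l < k" "x < ys ! h"
  shows "x < ys ! l"
proof (rule ccontr)
  let ?xs = "ys @ [x]" and ?n = "length ys"
  assume "\<not> x < ys ! l"
  moreover have "ys ! l \<noteq> x" using dist assms(5) split by (auto simp: direct_split_def)
  ultimately have "ys ! l < x" by simp
  moreover have "ys ! h < ys ! k" using split assms(4,5) by (simp add: direct_split_def)
  ultimately have "?xs ! l < ?xs ! ?n \<and> ?xs ! ?n < ?xs ! h \<and> ?xs ! h < ?xs ! k"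
    using assms(4-6) split by (simp add: nth_append direct_split_def)
  \<comment> \<open>positions \<open>h < l < k < n\<close> carry an occurrence of 3142\<close>
  moreover have "h < l" "l < k" "k < ?n" "?n < length ?xs" using assms(4,5) split by (auto simp: direct_split_def)
  ultimately show False using sep unfolding separable_def by blast
qed

lemma direct_split_snoc_straddling:
  assumes dist: "distinct (ys @ [x])" and sep: "separable (ys @ [x])" and split: "direct_split ys k"
    and above: "a < k" "x < ys ! a" and below: "t < length ys" "ys ! t < x"
  shows "direct_decomposable (ys @ [x])"
proof -
  let ?xs = "ys @ [x]" and ?n = "length ys"
  have k: "0 < k" "k < ?n" and lt: "\<And>i j. i < k \<Longrightarrow> k \<le> j \<Longrightarrow> j < ?n \<Longrightarrow> ys!i < ys!j"
    using split unfolding direct_split_def by auto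
  have ne: "i < ?n \<Longrightarrow> ys!i \<noteq> x" for i using dist by (auto simp: in_set_conv_nth)
  \<comment> \<open>The entries of the first block above \<open>x\<close> form a suffix of it; the new split is where it starts.\<close>
  have "t < k" using lt[OF above(1), of t] above below by (meson leI less_trans not_less_iff_gr_or_eq)
  define k' where "k' = (LEAST i. x < ys!i)"
  have "x < ys!k'" unfolding k'_def by (rule LeastI[of _ a]) (rule above(2))
  have "k' \<le> a" unfolding k'_def by (rule Least_le) (rule above(2))
  have low: "ys!i < x" if "i < k'" for i
    using not_less_Least[OF that[unfolded k'_def]] ne[of i] that \<open>k' \<le> a\<close> above k by auto
  have high: "x < ys!i" if "k' \<le> i" "i < k" for i
    using direct_split_snoc_above_upward_closed[OF dist sep split, of k' i] \<open>x < ys!k'\<close> that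
    by (cases "i = k'") auto
  have "t < k'" using high[of t] below \<open>t < k\<close> by (meson leI less_asym)
  have "direct_split ?xs k'"
    unfolding direct_split_def
  proof (intro conjI allI impI)
    show "0 < k'" using \<open>t < k'\<close> by simp
    show "k' < length ?xs" using \<open>k' \<le> a\<close> above k by simp
    fix i j assume ij: "i < k'" "k' \<le> j" "j < length ?xs"
    have "i < ?n" using ij \<open>k' \<le> a\<close> above k by simp
    consider "j = ?n" | "j < k" | "k \<le> j" "j < ?n" using ij by fastforce
    thus "?xs!i < ?xs!j"
    proof cases
      case 1 thus ?thesis using low[OF ij(1)] \<open>i < ?n\<close> by (simp add: nth_append)
    next
      case 2 thus ?thesis using low[OF ij(1)] high[OF ij(2)] \<open>i < ?n\<close> k by (simp add: nth_append)
    next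
      case 3 thus ?thesis using lt[of i j] ij \<open>k' \<le> a\<close> above by (simp add: nth_append)
    qed
  qed
  thus ?thesis unfolding direct_decomposable_def by blast
qed

lemma decomposable_snoc_direct:
  assumes dist: "distinct (ys @ [x])" and sep: "separable (ys @ [x])" and split: "direct_split ys k"
  shows "direct_decomposable (ys @ [x]) \<or> skew_decomposable (ys @ [x])"
proof -
  let ?xs = "ys @ [x]" and ?n = "length ys"
  have k: "0 < k" "k < ?n" and lt: "\<And>i j. i < k \<Longrightarrow> k \<le> j \<Longrightarrow> j < ?n \<Longrightarrow> ys!i < ys!j"
    using split unfolding direct_split_def by auto
  have ne: "i < ?n \<Longrightarrow> ys!i \<noteq> x" for i using dist by (auto simp: in_set_conv_nth)
  consider "\<forall>i<k. ys!i < x" | a where "a < k" "x < ys!a" using ne k by (meson less_trans not_less_iff_gr_or_eq)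
  thus ?thesis
  proof cases
    case 1
    have "direct_split ?xs k" unfolding direct_split_def using k 1 lt
      by (auto simp: nth_append not_less less_Suc_eq)
    thus ?thesis unfolding direct_decomposable_def by blast
  next
    case (2 a)
    consider "\<forall>i<?n. x < ys!i" | t where "t < ?n" "ys!t < x" using ne by (meson not_less_iff_gr_or_eq)
    thus ?thesis
    proof cases
      case 1
      have "skew_split ?xs ?n" unfolding skew_split_def using 1 k by (auto simp: nth_append)
      thus ?thesis unfolding skew_decomposable_def by blast
    next
      case (2 t)
      thus ?thesis using direct_split_snoc_straddling[OF dist sep split \<open>a < k\<close> \<open>x < ys!a\<close>] by blast
    qed
  qed
qed

lemma decomposable_snoc_skew:
  assumes dist: "distinct (ys @ [x])" and sep: "separable (ys @ [x])" and split: "skew_split ys k"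
  shows "direct_decomposable (ys @ [x]) \<or> skew_decomposable (ys @ [x])"
proof -
  \<comment> \<open>Complementation reduces this to the direct case.\<close>
  define M where "M = Suc (Max (set (ys @ [x])))"
  have bound: "\<forall>v\<in>set (ys @ [x]). v < M"
    unfolding M_def using Max_ge[of "set (ys @ [x])"] by (auto simp: less_Suc_eq_le)
  have "distinct (complement M (ys @ [x]))" using dist bound by (simp add: distinct_complement_iff)
  moreover have "separable (complement M (ys @ [x]))" using sep bound by (simp add: separable_complement_iff)
  moreover have "direct_split (complement M ys) k" using split bound by (simp add: direct_split_complement_iff)
  ultimately have "direct_decomposable (complement M (ys @ [x])) \<or> skew_decomposable (complement M (ys @ [x]))"
    using decomposable_snoc_direct[of "complement M ys" "M - Suc x"] by (simp add: complement_def)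
  thus ?thesis using bound
    by (auto simp: direct_decomposable_def skew_decomposable_def
        direct_split_complement_iff skew_split_complement_iff)
qed

lemma separable_decomposable:
  assumes "distinct xs" "separable xs" "2 \<le> length xs"
  shows "direct_decomposable xs \<or> skew_decomposable xs"
  using assms
proof (induction xs rule: rev_induct)
  case Nil thus ?case by simp
next
  case (snoc x ys)
  show ?case
  proof (cases "length ys = 1")
    case True
    then obtain a where "ys = [a]" by (cases ys) auto
    moreover have "a \<noteq> x" using snoc.prems \<open>ys = [a]\<close> by simp
    ultimately have "direct_split (ys @ [x]) 1 \<or> skew_split (ys @ [x]) 1"
      unfolding direct_split_def skew_split_def by (auto simp: nth_append less_Suc_eq)
    thus ?thesis unfolding direct_decomposable_def skew_decomposable_def by blast
  next
    case False
    have "separable ys" using separable_take[OF snoc.prems(2), of "length ys"] by simp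
    hence "direct_decomposable ys \<or> skew_decomposable ys" using snoc False by simp
    thus ?thesis using decomposable_snoc_direct decomposable_snoc_skew snoc.prems
      unfolding direct_decomposable_def skew_decomposable_def by blast
  qed
qed

section \<open>Alternating sequences and direct sums\<close>

definition alternating_from :: "nat \<Rightarrow> nat list \<Rightarrow> bool" where
  "alternating_from b xs \<longleftrightarrow> (\<forall>i. Suc i < length xs \<longrightarrow> (xs!i < xs!Suc i \<longleftrightarrow> even (i + b)))"

lemma alternating_from_mod_2: "alternating_from b = alternating_from (b mod 2)"
  unfolding alternating_from_def by (intro ext) (simp add: even_add)

lemma alternating_from_take: "alternating_from b xs \<Longrightarrow> alternating_from b (take k xs)"
  unfolding alternating_from_def by auto

lemma alternating_from_drop: "alternating_from b xs \<Longrightarrow> alternating_from (b + k) (drop k xs)"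
  unfolding alternating_from_def by (auto simp: add.commute add.left_commute)

lemma alternating_from_map_strict_mono:
  "strict_mono_on (set xs) f \<Longrightarrow> alternating_from b (map f xs) \<longleftrightarrow> alternating_from b xs"
  unfolding alternating_from_def by (simp add: strict_mono_on_less)

lemma alternating_from_complement_iff:
  assumes "\<forall>v\<in>set xs. v < M" and "distinct xs"
  shows "alternating_from b (complement M xs) \<longleftrightarrow> alternating_from (Suc b) xs"
proof -
  have "complement M xs ! i < complement M xs ! Suc i \<longleftrightarrow> \<not> xs ! i < xs ! Suc i"
    if "Suc i < length xs" for i
  proof -
    have "xs ! i \<noteq> xs ! Suc i" using that assms(2) by (simp add: nth_eq_iff_index_eq)
    thus ?thesis using that assms(1) by (auto simp: complement_less_iff)
  qed
  thus ?thesis unfolding alternating_from_def by auto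
qed

lemma permutations_of_set_lessThan_length:
  "xs \<in> permutations_of_set {0..<m} \<Longrightarrow> length xs = m"
  using length_finite_permutations_of_set by fastforce

lemma down_closed_eq_atLeast0LessThan:
  assumes "finite S" and "\<forall>v\<in>S. \<forall>w<v. w \<in> S"
  shows "S = {0..<card S}"
proof -
  have "S \<subseteq> {0..<card S}"
  proof
    fix v assume "v \<in> S"
    hence "{0..v} \<subseteq> S" using assms(2) by (auto simp: le_less)
    hence "card {0..v} \<le> card S" using assms(1) by (rule card_mono[rotated])
    thus "v \<in> {0..<card S}" by simp
  qed
  thus ?thesis using card_subset_eq[of "{0..<card S}" S] by simp
qed

definition direct_sum :: "nat list \<Rightarrow> nat list \<Rightarrow> nat list" where
  "direct_sum s t = s @ map (\<lambda>v. v + length s) t"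

lemma direct_sum_inject:
  assumes "direct_sum s t = direct_sum s' t'" and "length s = length s'"
  shows "s = s'" and "t = t'"
proof -
  show "s = s'" using arg_cong[OF assms(1), of "take (length s)"] assms(2) by (simp add: direct_sum_def)
  have "map (\<lambda>v. v + length s) t = map (\<lambda>v. v + length s) t'"
    using arg_cong[OF assms(1), of "drop (length s)"] assms(2) by (simp add: direct_sum_def)
  thus "t = t'" by (simp add: inj_map_eq_map inj_on_def)
qed

lemma separable_append:
  assumes below: "\<forall>a\<in>set s. \<forall>b\<in>set t. a < b" and sep: "separable s" "separable t"
  shows "separable (s @ t)"
  unfolding separable_def
proof (intro allI impI)
  fix i j k l assume idx: "i < j" "j < k" "k < l" "l < length (s @ t)"
  let ?xs = "s @ t" and ?n = "length s"
  have cross: "?xs!a < ?xs!b" if "a < ?n" "?n \<le> b" "b < length ?xs" for a b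
    using below that by (simp add: nth_append)
  consider "l < ?n" | "?n \<le> i" | "i < ?n" "?n \<le> l" by linarith
  thus "\<not> (?xs!k < ?xs!i \<and> ?xs!i < ?xs!l \<and> ?xs!l < ?xs!j) \<and> \<not> (?xs!j < ?xs!l \<and> ?xs!l < ?xs!i \<and> ?xs!i < ?xs!k)"
  proof cases
    case 1
    hence "\<not> (s!k < s!i \<and> s!i < s!l \<and> s!l < s!j) \<and> \<not> (s!j < s!l \<and> s!l < s!i \<and> s!i < s!k)"
      using sep(1) idx unfolding separable_def by blast
    thus ?thesis using 1 idx by (simp add: nth_append)
  next
    case 2
    have "i - ?n < j - ?n" "j - ?n < k - ?n" "k - ?n < l - ?n" "l - ?n < length t" using 2 idx by auto
    hence "\<not> (t!(k-?n) < t!(i-?n) \<and> t!(i-?n) < t!(l-?n) \<and> t!(l-?n) < t!(j-?n)) \<and>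
        \<not> (t!(j-?n) < t!(l-?n) \<and> t!(l-?n) < t!(i-?n) \<and> t!(i-?n) < t!(k-?n))"
      using sep(2) unfolding separable_def by blast
    thus ?thesis using 2 idx by (simp add: nth_append)
  next
    case 3
    have "?xs!i < ?xs!l" using cross 3 idx by simp
    moreover have "?xs!i < ?xs!k \<or> ?xs!j < ?xs!l"
      using cross[of i k] cross[of j l] 3 idx by (cases "k < ?n") auto
    ultimately show ?thesis by auto
  qed
qed

lemma alternating_from_append_iff:
  "alternating_from b (s @ t) \<longleftrightarrow>
     alternating_from b s \<and> alternating_from (b + length s) t \<and>
     (s \<noteq> [] \<longrightarrow> t \<noteq> [] \<longrightarrow> (last s < hd t \<longleftrightarrow> even (length s - 1 + b)))"
  (is "?lhs \<longleftrightarrow> ?rhs")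
proof
  assume alt: ?lhs
  have "alternating_from b s" using alternating_from_take[OF alt, of "length s"] by simp
  moreover have "alternating_from (b + length s) t" using alternating_from_drop[OF alt, of "length s"] by simp
  moreover have "last s < hd t \<longleftrightarrow> even (length s - 1 + b)" if "s \<noteq> []" "t \<noteq> []"
    using alt[unfolded alternating_from_def, rule_format, of "length s - 1"] that
    by (simp add: nth_append last_conv_nth hd_conv_nth)
  ultimately show ?rhs by blast
next
  assume ?rhs
  hence s: "alternating_from b s" and t: "alternating_from (b + length s) t"
    and junction: "s \<noteq> [] \<Longrightarrow> t \<noteq> [] \<Longrightarrow> (last s < hd t \<longleftrightarrow> even (length s - 1 + b))" by auto
  show ?lhs unfolding alternating_from_def
  proof (intro allI impI)
    fix i assume i: "Suc i < length (s @ t)"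
    consider "Suc i < length s" | "Suc i = length s" | "length s \<le> i" by linarith
    thus "(s @ t)!i < (s @ t)!Suc i \<longleftrightarrow> even (i + b)"
    proof cases
      case 1 thus ?thesis using s unfolding alternating_from_def by (simp add: nth_append)
    next
      case 2
      hence "i = length s - 1" "s \<noteq> []" "t \<noteq> []" using i by auto
      thus ?thesis using junction by (simp add: nth_append last_conv_nth hd_conv_nth)
    next
      case 3
      hence "Suc (i - length s) < length t" "Suc i - length s = Suc (i - length s)" using i by auto
      thus ?thesis using t 3 unfolding alternating_from_def
        by (auto simp: nth_append add.commute add.left_commute)
    qed
  qed
qed

lemma direct_sum_below:
  assumes "s \<in> permutations_of_set {0..<k}"
  shows "\<forall>a\<in>set s. \<forall>b\<in>set (map (\<lambda>v. v + length s) t). a < b"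
  using assms permutations_of_set_lessThan_length[OF assms] by (auto simp: permutations_of_set_def)

lemma direct_sum_permutations:
  assumes s: "s \<in> permutations_of_set {0..<k}" and t: "t \<in> permutations_of_set {0..<n}"
  shows "direct_sum s t \<in> permutations_of_set {0..<k + n}"
proof
  have len: "length s = k" using s by (rule permutations_of_set_lessThan_length)
  show "set (direct_sum s t) = {0..<k + n}"
    using s t len by (auto simp: permutations_of_set_def direct_sum_def)
  show "distinct (direct_sum s t)"
    using s t len direct_sum_below[OF s, of t] unfolding direct_sum_def permutations_of_set_def
    by (auto simp: distinct_map)
qed

lemma separable_direct_sum_iff:
  assumes s: "s \<in> permutations_of_set {0..<k}"
  shows "separable (direct_sum s t) \<longleftrightarrow> separable s \<and> separable t"
proof
  assume sep: "separable (direct_sum s t)"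
  have "separable s" using separable_take[OF sep, of "length s"] by (simp add: direct_sum_def)
  moreover have "separable (map (\<lambda>v. v + length s) t)"
    using separable_drop[OF sep, of "length s"] by (simp add: direct_sum_def)
  hence "separable (map (\<lambda>v. v - length s) (map (\<lambda>v. v + length s) t))"
    by (rule separable_map_strict_mono[rotated]) (auto simp: strict_mono_on_def)
  ultimately show "separable s \<and> separable t" by (simp add: comp_def)
next
  assume "separable s \<and> separable t"
  thus "separable (direct_sum s t)" unfolding direct_sum_def
    by (intro separable_append direct_sum_below[OF s] separable_map_strict_mono)
       (auto simp: strict_mono_on_def)
qed

lemma alternating_from_direct_sum_iff:
  assumes s: "s \<in> permutations_of_set {0..<k}" and "0 < k" and "t \<noteq> []"
  shows "alternating_from b (direct_sum s t) \<longleftrightarrow>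
    alternating_from b s \<and> alternating_from (b + k) t \<and> even (k - 1 + b)"
proof -
  have len: "length s = k" using s by (rule permutations_of_set_lessThan_length)
  have "last s \<in> {0..<k}" using last_in_set[of s] s assms(2) len by (auto simp: permutations_of_set_def)
  hence "last s < hd (map (\<lambda>v. v + length s) t)" using assms(3) len by (simp add: hd_map)
  moreover have "alternating_from (b + k) (map (\<lambda>v. v + k) t) \<longleftrightarrow> alternating_from (b + k) t"
    by (rule alternating_from_map_strict_mono) (auto simp: strict_mono_on_def)
  ultimately show ?thesis using assms len
    unfolding direct_sum_def alternating_from_append_iff by auto
qed

lemma direct_split_direct_sum:
  assumes "s \<in> permutations_of_set {0..<k}" and "0 < k" and "t \<noteq> []"
  shows "direct_split (direct_sum s t) k"
  using direct_sum_below[OF assms(1), of t] assms permutations_of_set_lessThan_length[OF assms(1)]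
  unfolding direct_split_def direct_sum_def by (auto simp: nth_append not_less)

lemma direct_split_direct_sum_iff:
  assumes "s \<in> permutations_of_set {0..<k}" and "k' < k"
  shows "direct_split (direct_sum s t) k' \<longleftrightarrow> direct_split s k'"
proof -
  have len: "length s = k" using assms(1) by (rule permutations_of_set_lessThan_length)
  have "direct_sum s t ! i < direct_sum s t ! j"
    if "i < k" "k \<le> j" "j < length (direct_sum s t)" for i j
    using direct_sum_below[OF assms(1), of t] that len by (auto simp: direct_sum_def nth_append)
  thus ?thesis using assms(2) len unfolding direct_split_def
    by (auto simp: direct_sum_def nth_append)
qed

lemma set_take_direct_split:
  assumes xs: "xs \<in> permutations_of_set {0..<m}" and split: "direct_split xs k"
  shows "set (take k xs) = {0..<k}"
proof -
  let ?s = "take k xs" and ?u = "drop k xs"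
  have len: "length xs = m" using xs by (rule permutations_of_set_lessThan_length)
  have k: "k < m" using split len by (simp add: direct_split_def)
  have below: "\<forall>a\<in>set ?s. \<forall>b\<in>set ?u. a < b"
  proof (intro ballI)
    fix a b assume "a \<in> set ?s" "b \<in> set ?u"
    obtain i where "i < k" "a = xs ! i"
      using \<open>a \<in> set ?s\<close> k len by (auto simp: in_set_conv_nth)
    moreover obtain j where "j < m - k" "b = xs ! (k + j)"
      using \<open>b \<in> set ?u\<close> k len by (auto simp: in_set_conv_nth)
    ultimately show "a < b" using split len by (simp add: direct_split_def)
  qed
  have parts: "set ?s \<union> set ?u = {0..<m}"
    using xs by (metis set_append append_take_drop_id permutations_of_setD(1))
  have "set ?s = {0..<card (set ?s)}"
  proof (rule down_closed_eq_atLeast0LessThan)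
    show "\<forall>v\<in>set ?s. \<forall>w<v. w \<in> set ?s"
    proof (intro ballI allI impI)
      fix v w assume "v \<in> set ?s" "w < v"
      moreover have "v < m" using \<open>v \<in> set ?s\<close> parts by auto
      ultimately have "w \<in> set ?s \<union> set ?u" using parts by auto
      moreover have "w \<notin> set ?u" using below \<open>v \<in> set ?s\<close> \<open>w < v\<close> by (meson less_asym)
      ultimately show "w \<in> set ?s" by blast
    qed
  qed simp
  also have "card (set ?s) = k"
    using xs k len by (simp add: distinct_card permutations_of_set_def)
  finally show ?thesis .
qed

lemma direct_split_imp_direct_sum:
  assumes xs: "xs \<in> permutations_of_set {0..<m}" and split: "direct_split xs k"
  obtains s t where "s \<in> permutations_of_set {0..<k}" and "t \<in> permutations_of_set {0..<m - k}"
    and "xs = direct_sum s t"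
proof -
  let ?s = "take k xs" and ?u = "drop k xs"
  have len: "length xs = m" using xs by (rule permutations_of_set_lessThan_length)
  have k: "k < m" using split len by (simp add: direct_split_def)
  have dist: "distinct xs" and set_xs: "set xs = {0..<m}" using xs by (auto simp: permutations_of_set_def)
  have set_s: "set ?s = {0..<k}" using xs split by (rule set_take_direct_split)
  have set_u: "set ?u = {k..<m}"
  proof -
    have "set ?s \<inter> set ?u = {}" using dist by (metis distinct_append append_take_drop_id)
    moreover have "set ?s \<union> set ?u = {0..<m}" using set_xs by (metis set_append append_take_drop_id)
    ultimately have "set ?u = {0..<m} - {0..<k}" using set_s by blast
    thus ?thesis by auto
  qed
  have "?u \<in> permutations_of_set {k..<m}" using set_u dist by (simp add: permutations_of_set_def)
  moreover have "inj_on (\<lambda>v. v - k) {k..<m}" by (auto simp: inj_on_def)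
  ultimately have "map (\<lambda>v. v - k) ?u \<in> permutations_of_set {0..<m - k}"
    using permutations_of_set_image_inj[of "\<lambda>v. v - k" "{k..<m}"] k
    by (simp add: image_minus_const_atLeastLessThan_nat)
  moreover have "?s \<in> permutations_of_set {0..<k}" using set_s dist by (simp add: permutations_of_set_def)
  moreover have "xs = direct_sum ?s (map (\<lambda>v. v - k) ?u)"
  proof -
    have "map (\<lambda>v. v - k + k) ?u = ?u" using set_u by (intro map_idI) auto
    thus ?thesis using k len by (simp add: direct_sum_def comp_def min_def)
  qed
  ultimately show ?thesis using that by blast
qed

section \<open>Counting alternating separable permutations\<close>

definition alt_sep :: "nat \<Rightarrow> nat \<Rightarrow> nat list set" where
  "alt_sep b m = {xs \<in> permutations_of_set {0..<m}. alternating_from b xs \<and> separable xs}"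

definition alt_sep_direct :: "nat \<Rightarrow> nat \<Rightarrow> nat list set" where
  "alt_sep_direct b m = {xs \<in> alt_sep b m. direct_decomposable xs}"

definition alt_sep_skew :: "nat \<Rightarrow> nat \<Rightarrow> nat list set" where
  "alt_sep_skew b m = {xs \<in> alt_sep b m. skew_decomposable xs}"

definition alt_sep_first_split :: "nat \<Rightarrow> nat \<Rightarrow> nat \<Rightarrow> nat list set" where
  "alt_sep_first_split b m k = {xs \<in> alt_sep b m. direct_split xs k \<and> (\<forall>k'<k. \<not> direct_split xs k')}"

lemma finite_alt_sep [simp]: "finite (alt_sep b m)"
  unfolding alt_sep_def by simp

lemma finite_alt_sep_direct [simp]: "finite (alt_sep_direct b m)"
  unfolding alt_sep_direct_def by simp

lemma finite_alt_sep_skew [simp]: "finite (alt_sep_skew b m)"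
  unfolding alt_sep_skew_def by simp

lemma alt_sep_mod_2: "alt_sep b m = alt_sep (b mod 2) m"
  unfolding alt_sep_def by (subst alternating_from_mod_2) (rule refl)

lemma alt_sep_direct_mod_2: "alt_sep_direct b m = alt_sep_direct (b mod 2) m"
  unfolding alt_sep_direct_def by (subst alt_sep_mod_2) (rule refl)

lemma card_alt_sep_eq:
  assumes "1 \<le> m"
  shows "card (alt_sep b m) = (if m = 1 then 1 else 0) + card (alt_sep_direct b m) + card (alt_sep_skew b m)"
proof (cases "m = 1")
  case True
  hence "alt_sep b m = {[0]}" by (auto simp: alt_sep_def alternating_from_def separable_def)
  moreover have "alt_sep_direct b m = {}" "alt_sep_skew b m = {}"
    unfolding alt_sep_direct_def alt_sep_skew_def \<open>alt_sep b m = {[0]}\<close>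
    by (auto simp: direct_decomposable_def skew_decomposable_def direct_split_def skew_split_def)
  ultimately show ?thesis using True by simp
next
  case False
  have "alt_sep b m = alt_sep_direct b m \<union> alt_sep_skew b m"
    using separable_decomposable permutations_of_set_lessThan_length False assms
    by (fastforce simp: alt_sep_def alt_sep_direct_def alt_sep_skew_def permutations_of_set_def)
  moreover have "alt_sep_direct b m \<inter> alt_sep_skew b m = {}"
    using not_direct_and_skew_split
    by (auto simp: alt_sep_direct_def alt_sep_skew_def direct_decomposable_def skew_decomposable_def)
  ultimately show ?thesis using False by (simp add: card_Un_disjoint)
qed

lemma complement_permutations:
  assumes "xs \<in> permutations_of_set {0..<m}"
  shows "complement m xs \<in> permutations_of_set {0..<m}"
proof -
  have "(\<lambda>v. m - Suc v) ` {0..<m} = {0..<m}"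
  proof
    show "{0..<m} \<subseteq> (\<lambda>v. m - Suc v) ` {0..<m}"
    proof
      fix y assume "y \<in> {0..<m}"
      thus "y \<in> (\<lambda>v. m - Suc v) ` {0..<m}" by (intro image_eqI[of _ _ "m - Suc y"]) auto
    qed
  qed auto
  thus ?thesis using assms distinct_complement_iff[of xs m]
    by (auto simp: permutations_of_set_def complement_def)
qed

text \<open>Complementation exchanges skew and direct sums and flips the alternation.\<close>

lemma card_alt_sep_skew: "card (alt_sep_skew b m) = card (alt_sep_direct (Suc b) m)"
proof -
  have bound: "\<forall>v\<in>set xs. v < m" if "xs \<in> permutations_of_set {0..<m}" for xs
    using that by (auto simp: permutations_of_set_def)
  have member: "complement m xs \<in> alt_sep_skew b m \<longleftrightarrow> xs \<in> alt_sep_direct (Suc b) m"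
    if "xs \<in> permutations_of_set {0..<m}" for xs
    using that complement_permutations[OF that] bound[OF that]
    by (auto simp: alt_sep_skew_def alt_sep_direct_def alt_sep_def permutations_of_set_def
        alternating_from_complement_iff separable_complement_iff
        skew_decomposable_def direct_decomposable_def skew_split_complement_iff)
  have "alt_sep_skew b m = complement m ` alt_sep_direct (Suc b) m"
  proof
    show "alt_sep_skew b m \<subseteq> complement m ` alt_sep_direct (Suc b) m"
    proof
      fix xs assume xs: "xs \<in> alt_sep_skew b m"
      hence perm: "xs \<in> permutations_of_set {0..<m}" by (simp add: alt_sep_skew_def alt_sep_def)
      hence "complement m xs \<in> alt_sep_direct (Suc b) m"
        using xs member[OF complement_permutations[OF perm]] complement_complement[OF bound[OF perm]] by simp
      thus "xs \<in> complement m ` alt_sep_direct (Suc b) m"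
        using complement_complement[OF bound[OF perm]] by (metis image_eqI)
    qed
    show "complement m ` alt_sep_direct (Suc b) m \<subseteq> alt_sep_skew b m"
      using member by (auto simp: alt_sep_direct_def alt_sep_def)
  qed
  moreover have "inj_on (complement m) (alt_sep_direct (Suc b) m)"
    by (rule inj_on_inverseI[where g = "complement m"])
       (auto simp: alt_sep_direct_def alt_sep_def intro!: complement_complement[OF bound])
  ultimately show ?thesis by (simp add: card_image)
qed

lemma direct_sum_in_alt_sep_first_split_iff:
  assumes s: "s \<in> permutations_of_set {0..<k}" and t: "t \<in> permutations_of_set {0..<n}"
    and "0 < k" "0 < n"
  shows "direct_sum s t \<in> alt_sep_first_split b (k + n) k \<longleftrightarrow>
    s \<in> alt_sep b k - alt_sep_direct b k \<and> t \<in> alt_sep (b + k) n \<and> even (k - 1 + b)"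
proof -
  have len_s: "length s = k" using s by (rule permutations_of_set_lessThan_length)
  have "t \<noteq> []" using t \<open>0 < n\<close> permutations_of_set_lessThan_length by fastforce
  have minimal: "(\<forall>k'<k. \<not> direct_split (direct_sum s t) k') \<longleftrightarrow> \<not> direct_decomposable s"
    using direct_split_direct_sum_iff[OF s] len_s by (auto simp: direct_decomposable_def direct_split_def)
  show ?thesis
    unfolding alt_sep_first_split_def alt_sep_direct_def alt_sep_def mem_Collect_eq Diff_iff minimal
      alternating_from_direct_sum_iff[OF s \<open>0 < k\<close> \<open>t \<noteq> []\<close>] separable_direct_sum_iff[OF s]
    using direct_sum_permutations[OF s t] direct_split_direct_sum[OF s \<open>0 < k\<close> \<open>t \<noteq> []\<close>] s t
    by blast
qed

lemma alt_sep_first_split_eq_image: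
  assumes "0 < k" "k < m"
  shows "alt_sep_first_split b m k =
    (if even (k - 1 + b)
     then (\<lambda>(s, t). direct_sum s t) ` ((alt_sep b k - alt_sep_direct b k) \<times> alt_sep (b + k) (m - k))
     else {})"
proof -
  have m: "m = k + (m - k)" using assms by simp
  have "xs \<in> alt_sep_first_split b m k \<longleftrightarrow> even (k - 1 + b) \<and>
      xs \<in> (\<lambda>(s, t). direct_sum s t) ` ((alt_sep b k - alt_sep_direct b k) \<times> alt_sep (b + k) (m - k))"
    for xs
  proof
    assume xs: "xs \<in> alt_sep_first_split b m k"
    hence "xs \<in> permutations_of_set {0..<m}" "direct_split xs k"
      by (auto simp: alt_sep_first_split_def alt_sep_def)
    then obtain s t where s: "s \<in> permutations_of_set {0..<k}" and t: "t \<in> permutations_of_set {0..<m - k}"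
      and "xs = direct_sum s t" by (rule direct_split_imp_direct_sum)
    thus "even (k - 1 + b) \<and>
      xs \<in> (\<lambda>(s, t). direct_sum s t) ` ((alt_sep b k - alt_sep_direct b k) \<times> alt_sep (b + k) (m - k))"
      using xs direct_sum_in_alt_sep_first_split_iff[OF s t] assms m by auto
  next
    assume "even (k - 1 + b) \<and>
      xs \<in> (\<lambda>(s, t). direct_sum s t) ` ((alt_sep b k - alt_sep_direct b k) \<times> alt_sep (b + k) (m - k))"
    then obtain s t where "even (k - 1 + b)" "s \<in> alt_sep b k - alt_sep_direct b k" "t \<in> alt_sep (b + k) (m - k)"
      and "xs = direct_sum s t" by auto
    thus "xs \<in> alt_sep_first_split b m k"
      using direct_sum_in_alt_sep_first_split_iff[of s k t "m - k" b] assms m by (auto simp: alt_sep_def)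
  qed
  thus ?thesis by auto
qed

lemma card_alt_sep_first_split:
  assumes "0 < k" "k < m"
  shows "card (alt_sep_first_split b m k) =
    (if even (k - 1 + b) then card (alt_sep b k - alt_sep_direct b k) * card (alt_sep (b + k) (m - k)) else 0)"
proof -
  have "inj_on (\<lambda>(s, t). direct_sum s t) ((alt_sep b k - alt_sep_direct b k) \<times> alt_sep (b + k) (m - k))"
  proof (rule inj_onI, clarify)
    fix s t s' t' assume "s \<in> alt_sep b k" "s' \<in> alt_sep b k" and eq: "direct_sum s t = direct_sum s' t'"
    hence "length s = length s'" using permutations_of_set_lessThan_length by (auto simp: alt_sep_def)
    thus "s = s' \<and> t = t'" using direct_sum_inject[OF eq] by simp
  qed
  thus ?thesis using assms by (simp add: alt_sep_first_split_eq_image card_image card_cartesian_product)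
qed

text \<open>Cutting a direct sum at its first split point.\<close>

lemma card_alt_sep_direct:
  "card (alt_sep_direct b m) = (\<Sum>k = 1..<m.
     if even (k - 1 + b) then card (alt_sep b k - alt_sep_direct b k) * card (alt_sep (b + k) (m - k)) else 0)"
proof -
  have "alt_sep_direct b m = (\<Union>k\<in>{1..<m}. alt_sep_first_split b m k)"
  proof
    show "alt_sep_direct b m \<subseteq> (\<Union>k\<in>{1..<m}. alt_sep_first_split b m k)"
    proof
      fix xs assume xs: "xs \<in> alt_sep_direct b m"
      then obtain k where "direct_split xs k" by (auto simp: alt_sep_direct_def direct_decomposable_def)
      define k0 where "k0 = (LEAST k. direct_split xs k)"
      have k0: "direct_split xs k0" unfolding k0_def by (rule LeastI) fact
      have "\<forall>k'<k0. \<not> direct_split xs k'" unfolding k0_def using not_less_Least by blast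
      hence "xs \<in> alt_sep_first_split b m k0"
        using xs k0 by (simp add: alt_sep_first_split_def alt_sep_direct_def)
      moreover have "length xs = m"
        using xs permutations_of_set_lessThan_length by (auto simp: alt_sep_direct_def alt_sep_def)
      hence "k0 \<in> {1..<m}" using k0 by (simp add: direct_split_def)
      ultimately show "xs \<in> (\<Union>k\<in>{1..<m}. alt_sep_first_split b m k)" by blast
    qed
  qed (auto simp: alt_sep_first_split_def alt_sep_direct_def direct_decomposable_def)
  moreover have "alt_sep_first_split b m i \<inter> alt_sep_first_split b m j = {}" if "i \<noteq> j" for i j
    using that by (auto simp: alt_sep_first_split_def neq_iff)
  ultimately have "card (alt_sep_direct b m) = (\<Sum>k = 1..<m. card (alt_sep_first_split b m k))"
    by (simp add: card_UN_disjoint alt_sep_first_split_def)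
  thus ?thesis by (simp add: card_alt_sep_first_split)
qed

definition alt_sep_count :: "nat \<Rightarrow> nat" where
  "alt_sep_count m = card (alt_sep 0 m)"

definition up_direct_count :: "nat \<Rightarrow> nat" where
  "up_direct_count m = card (alt_sep_direct 0 m)"

definition down_direct_count :: "nat \<Rightarrow> nat" where
  "down_direct_count m = card (alt_sep_direct 1 m)"

lemma alt_sep_direct_Suc_Suc: "alt_sep_direct (Suc (Suc b)) m = alt_sep_direct b m"
  by (metis alt_sep_direct_mod_2 mod_add_self2 add_2_eq_Suc')

lemma card_alt_sep_skew_mod_2: "card (alt_sep_skew b m) = card (alt_sep_direct (Suc (b mod 2)) m)"
  by (metis card_alt_sep_skew alt_sep_direct_mod_2 mod_Suc_eq)

lemma card_alt_sep_count:
  assumes "1 \<le> m"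
  shows "card (alt_sep b m) = (if m = 1 then 1 else 0) + up_direct_count m + down_direct_count m"
proof -
  have "card (alt_sep b m) = card (alt_sep (b mod 2) m)" by (subst alt_sep_mod_2) simp
  moreover have "b mod 2 = 0 \<or> b mod 2 = 1" by auto
  ultimately show ?thesis
    using card_alt_sep_eq[OF assms, of "b mod 2"] card_alt_sep_skew_mod_2[of "b mod 2" m]
      alt_sep_direct_Suc_Suc[of 0 m]
    by (auto simp: up_direct_count_def down_direct_count_def)
qed

lemma alt_sep_count_eq:
  "1 \<le> m \<Longrightarrow> alt_sep_count m = (if m = 1 then 1 else 0) + up_direct_count m + down_direct_count m"
  unfolding alt_sep_count_def by (rule card_alt_sep_count)

lemma card_alt_sep_direct_indecomposable:
  assumes "1 \<le> k"
  shows "card (alt_sep b k - alt_sep_direct b k) = (if k = 1 then 1 else 0) + card (alt_sep_direct (Suc b) k)"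
proof -
  have "card (alt_sep b k - alt_sep_direct b k) = card (alt_sep b k) - card (alt_sep_direct b k)"
    by (intro card_Diff_subset) (auto simp: alt_sep_direct_def)
  thus ?thesis using card_alt_sep_eq[OF assms, of b] card_alt_sep_skew[of b k] by simp
qed

lemma up_direct_count_rec:
  "up_direct_count m = (\<Sum>k = 1..<m.
     if odd k then ((if k = 1 then 1 else 0) + down_direct_count k) * alt_sep_count (m - k) else 0)"
  unfolding up_direct_count_def card_alt_sep_direct
proof (rule sum.cong)
  fix k assume "k \<in> {1..<m}"
  hence k: "1 \<le> k" "1 \<le> m - k" by auto
  hence "even (k - 1 + 0) \<longleftrightarrow> odd k" by (cases k) auto
  thus "(if even (k - 1 + 0) then card (alt_sep 0 k - alt_sep_direct 0 k) * card (alt_sep (0 + k) (m - k)) else 0)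
      = (if odd k then ((if k = 1 then 1 else 0) + down_direct_count k) * alt_sep_count (m - k) else 0)"
    using card_alt_sep_direct_indecomposable[OF k(1), of 0]
      card_alt_sep_count[OF k(2), of k] alt_sep_count_eq[OF k(2)]
    by (simp add: down_direct_count_def)
qed simp

lemma down_direct_count_rec:
  "down_direct_count m = (\<Sum>k = 1..<m. if even k then up_direct_count k * alt_sep_count (m - k) else 0)"
  unfolding down_direct_count_def card_alt_sep_direct
proof (rule sum.cong)
  fix k assume "k \<in> {1..<m}"
  hence k: "1 \<le> k" "1 \<le> m - k" by auto
  hence "even (k - 1 + 1) \<longleftrightarrow> even k" by (cases k) auto
  moreover have "even k \<Longrightarrow> card (alt_sep 1 k - alt_sep_direct 1 k) = up_direct_count k"
    using card_alt_sep_direct_indecomposable[OF k(1), of 1] alt_sep_direct_Suc_Suc[of 0 k]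
    by (auto simp: up_direct_count_def)
  ultimately show "(if even (k - 1 + 1) then card (alt_sep 1 k - alt_sep_direct 1 k) * card (alt_sep (1 + k) (m - k)) else 0)
      = (if even k then up_direct_count k * alt_sep_count (m - k) else 0)"
    using card_alt_sep_count[OF k(2), of "1 + k"] alt_sep_count_eq[OF k(2)] by simp
qed simp

lemma alt_sep_count_Suc_0: "alt_sep_count (Suc 0) = 1"
  using alt_sep_count_eq[of 1] up_direct_count_rec[of 1] down_direct_count_rec[of 1] by simp

section \<open>Generating functions\<close>

lemma sum_odd_reindex:
  fixes g :: "nat \<Rightarrow> 'a::comm_monoid_add"
  shows "(\<Sum>k = 1..<N. if odd k then g k else 0) = (\<Sum>i<N div 2. g (2 * i + 1))"
proof -
  have "(\<Sum>k = 1..<N. if odd k then g k else 0) = (\<Sum>k\<in>{k\<in>{1..<N}. odd k}. g k)"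
    by (rule sum.inter_filter[symmetric]) simp
  also have "{k\<in>{1..<N}. odd k} = (\<lambda>i. 2 * i + 1) ` {..<N div 2}"
  proof
    show "{k\<in>{1..<N}. odd k} \<subseteq> (\<lambda>i. 2 * i + 1) ` {..<N div 2}"
    proof
      fix k assume "k \<in> {k\<in>{1..<N}. odd k}"
      hence "k = 2 * (k div 2) + 1" "k div 2 < N div 2" by auto presburger+
      thus "k \<in> (\<lambda>i. 2 * i + 1) ` {..<N div 2}" by blast
    qed
  qed auto
  also have "(\<Sum>k\<in>(\<lambda>i. 2 * i + 1) ` {..<N div 2}. g k) = (\<Sum>i<N div 2. g (2 * i + 1))"
    by (rule sum.reindex_cong[where l = "\<lambda>i. 2 * i + 1"]) (auto simp: inj_on_def)
  finally show ?thesis .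
qed

lemma sum_even_reindex:
  fixes g :: "nat \<Rightarrow> 'a::comm_monoid_add"
  shows "(\<Sum>k = 1..<N. if even k then g k else 0) = (\<Sum>j = 1..<(N + 1) div 2. g (2 * j))"
proof -
  have "(\<Sum>k = 1..<N. if even k then g k else 0) = (\<Sum>k\<in>{k\<in>{1..<N}. even k}. g k)"
    by (rule sum.inter_filter[symmetric]) simp
  also have "{k\<in>{1..<N}. even k} = (\<lambda>j. 2 * j) ` {1..<(N + 1) div 2}"
  proof
    show "{k\<in>{1..<N}. even k} \<subseteq> (\<lambda>j. 2 * j) ` {1..<(N + 1) div 2}"
    proof
      fix k assume "k \<in> {k\<in>{1..<N}. even k}"
      hence "k = 2 * (k div 2)" "k div 2 \<in> {1..<(N + 1) div 2}" by auto
      thus "k \<in> (\<lambda>j. 2 * j) ` {1..<(N + 1) div 2}" by blast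
    qed
  qed auto
  also have "(\<Sum>k\<in>(\<lambda>j. 2 * j) ` {1..<(N + 1) div 2}. g k) = (\<Sum>j = 1..<(N + 1) div 2. g (2 * j))"
    by (rule sum.reindex_cong[where l = "\<lambda>j. 2 * j"]) (auto simp: inj_on_def)
  finally show ?thesis .
qed

definition alt_sep_odd_fps :: "'a::comm_ring_1 fps" where
  "alt_sep_odd_fps = Abs_fps (\<lambda>n. of_nat (alt_sep_count (2 * n + 1)))"

text \<open>The constant term is 0 rather than the count 1 of the empty sequence.\<close>

definition alt_sep_even_fps :: "'a::comm_ring_1 fps" where
  "alt_sep_even_fps = Abs_fps (\<lambda>n. if n = 0 then 0 else of_nat (alt_sep_count (2 * n)))"

definition up_odd_fps :: "'a::comm_ring_1 fps" where
  "up_odd_fps = Abs_fps (\<lambda>n. of_nat (up_direct_count (2 * n + 1)))"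

definition up_even_fps :: "'a::comm_ring_1 fps" where
  "up_even_fps = Abs_fps (\<lambda>n. of_nat (up_direct_count (2 * n)))"

definition down_odd_fps :: "'a::comm_ring_1 fps" where
  "down_odd_fps = Abs_fps (\<lambda>n. of_nat (down_direct_count (2 * n + 1)))"

definition down_even_fps :: "'a::comm_ring_1 fps" where
  "down_even_fps = Abs_fps (\<lambda>n. of_nat (down_direct_count (2 * n)))"

lemma up_direct_count_0: "up_direct_count 0 = 0"
  using up_direct_count_rec[of 0] by simp

lemma down_direct_count_0: "down_direct_count 0 = 0"
  using down_direct_count_rec[of 0] by simp

lemma alt_sep_odd_fps_eq: "(alt_sep_odd_fps :: 'a::comm_ring_1 fps) = 1 + up_odd_fps + down_odd_fps"
proof (rule fps_ext)
  fix n
  have "alt_sep_count (2 * n + 1) = (if n = 0 then 1 else 0) + up_direct_count (2 * n + 1) + down_direct_count (2 * n + 1)"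
    by (subst alt_sep_count_eq) simp_all
  thus "fps_nth (alt_sep_odd_fps :: 'a fps) n = fps_nth (1 + up_odd_fps + down_odd_fps) n"
    unfolding alt_sep_odd_fps_def up_odd_fps_def down_odd_fps_def by simp
qed

lemma alt_sep_even_fps_eq: "(alt_sep_even_fps :: 'a::comm_ring_1 fps) = up_even_fps + down_even_fps"
proof (rule fps_ext)
  fix n
  have "n \<noteq> 0 \<Longrightarrow> alt_sep_count (2 * n) = up_direct_count (2 * n) + down_direct_count (2 * n)"
    by (subst alt_sep_count_eq) simp_all
  thus "fps_nth (alt_sep_even_fps :: 'a fps) n = fps_nth (up_even_fps + down_even_fps) n"
    unfolding alt_sep_even_fps_def up_even_fps_def down_even_fps_def
    by (simp add: up_direct_count_0 down_direct_count_0)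
qed

lemma one_plus_down_odd_fps_nth:
  "fps_nth (1 + down_odd_fps) i = (of_nat ((if i = 0 then 1 else 0) + down_direct_count (2 * i + 1)) :: 'a::comm_ring_1)"
  unfolding down_odd_fps_def by simp

lemma up_odd_fps_eq: "(up_odd_fps :: 'a::comm_ring_1 fps) = (1 + down_odd_fps) * alt_sep_even_fps"
proof (rule fps_ext)
  fix n
  have "up_direct_count (2 * n + 1) = (\<Sum>i<n.
      ((if i = 0 then 1 else 0) + down_direct_count (2 * i + 1)) * alt_sep_count (2 * (n - i)))"
    unfolding up_direct_count_rec sum_odd_reindex by (intro sum.cong) (auto simp: right_diff_distrib')
  moreover have "fps_nth ((1 + down_odd_fps) * alt_sep_even_fps :: 'a fps) n = (\<Sum>i<n.
      of_nat ((if i = 0 then 1 else 0) + down_direct_count (2 * i + 1)) * of_nat (alt_sep_count (2 * (n - i))))"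
    unfolding fps_mult_nth one_plus_down_odd_fps_nth
    by (simp add: alt_sep_even_fps_def atLeast0AtMost lessThan_Suc_atMost[symmetric])
  ultimately show "fps_nth (up_odd_fps :: 'a fps) n = fps_nth ((1 + down_odd_fps) * alt_sep_even_fps) n"
    unfolding up_odd_fps_def by simp
qed

lemma up_even_fps_eq: "(up_even_fps :: 'a::comm_ring_1 fps) = fps_X * (1 + down_odd_fps) * alt_sep_odd_fps"
proof (rule fps_ext)
  fix n
  show "fps_nth (up_even_fps :: 'a fps) n = fps_nth (fps_X * (1 + down_odd_fps) * alt_sep_odd_fps) n"
  proof (cases n)
    case 0 thus ?thesis unfolding up_even_fps_def by (simp add: up_direct_count_0)
  next
    case (Suc m)
    have "up_direct_count (2 * n) = (\<Sum>i\<le>m.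
        ((if i = 0 then 1 else 0) + down_direct_count (2 * i + 1)) * alt_sep_count (2 * (m - i) + 1))"
      unfolding up_direct_count_rec sum_odd_reindex Suc lessThan_Suc_atMost[symmetric]
      by (intro sum.cong) (auto simp: right_diff_distrib' Suc_diff_le)
    moreover have "fps_nth (fps_X * (1 + down_odd_fps) * alt_sep_odd_fps :: 'a fps) n
        = fps_nth ((1 + down_odd_fps) * alt_sep_odd_fps :: 'a fps) m"
      unfolding mult.assoc fps_X_mult_nth using Suc by simp
    moreover have "fps_nth ((1 + down_odd_fps) * alt_sep_odd_fps :: 'a fps) m = (\<Sum>i\<le>m.
        of_nat ((if i = 0 then 1 else 0) + down_direct_count (2 * i + 1)) * of_nat (alt_sep_count (2 * (m - i) + 1)))"
      unfolding fps_mult_nth one_plus_down_odd_fps_nth by (simp add: alt_sep_odd_fps_def atLeast0AtMost)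
    ultimately show ?thesis unfolding up_even_fps_def by simp
  qed
qed

lemma down_odd_fps_eq: "(down_odd_fps :: 'a::comm_ring_1 fps) = up_even_fps * alt_sep_odd_fps"
proof (rule fps_ext)
  fix n
  have "down_direct_count (2 * n + 1) = (\<Sum>j\<le>n. up_direct_count (2 * j) * alt_sep_count (2 * (n - j) + 1))"
  proof -
    have "down_direct_count (2 * n + 1) = (\<Sum>j = 1..<n + 1. up_direct_count (2 * j) * alt_sep_count (2 * (n - j) + 1))"
      unfolding down_direct_count_rec sum_even_reindex
      by (intro sum.cong) (auto simp: right_diff_distrib' Suc_diff_le)
    also have "\<dots> = (\<Sum>j\<le>n. up_direct_count (2 * j) * alt_sep_count (2 * (n - j) + 1))"
      by (intro sum.mono_neutral_cong_left) (auto simp: up_direct_count_0 not_less_eq_eq)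
    finally show ?thesis .
  qed
  thus "fps_nth (down_odd_fps :: 'a fps) n = fps_nth (up_even_fps * alt_sep_odd_fps) n"
    unfolding down_odd_fps_def fps_mult_nth
    by (simp add: up_even_fps_def alt_sep_odd_fps_def atLeast0AtMost)
qed

lemma down_even_fps_eq: "(down_even_fps :: 'a::comm_ring_1 fps) = up_even_fps * alt_sep_even_fps"
proof (rule fps_ext)
  fix n
  have "down_direct_count (2 * n) = (\<Sum>j\<le>n. up_direct_count (2 * j) * (if n - j = 0 then 0 else alt_sep_count (2 * (n - j))))"
  proof -
    have "down_direct_count (2 * n) = (\<Sum>j = 1..<n. up_direct_count (2 * j) * alt_sep_count (2 * (n - j)))"
      unfolding down_direct_count_rec sum_even_reindex
      by (intro sum.cong) (auto simp: right_diff_distrib' Suc_diff_le)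
    also have "\<dots> = (\<Sum>j\<le>n. up_direct_count (2 * j) * (if n - j = 0 then 0 else alt_sep_count (2 * (n - j))))"
      by (intro sum.mono_neutral_cong_left) (auto simp: up_direct_count_0 not_less_eq_eq)
    finally show ?thesis .
  qed
  thus "fps_nth (down_even_fps :: 'a fps) n = fps_nth (up_even_fps * alt_sep_even_fps) n"
    unfolding down_even_fps_def fps_mult_nth
    by (auto simp: up_even_fps_def alt_sep_even_fps_def atLeast0AtMost intro!: sum.cong)
qed

lemma cubic_of_system:
  fixes A B Po Pe Mo Me X :: "'a::comm_ring_1 fps"
  assumes e1: "A = 1 + Po + Mo" and e2: "B = Pe + Me" and e3: "Po = (1 + Mo) * B"
    and e4: "Pe = X * (1 + Mo) * A" and e5: "Mo = Pe * A" and e6: "Me = Pe * B"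
  shows "A = 1 + X * A^2 + X * A^3"
proof -
  define Q where "Q = 1 + Mo"
  have A_eq: "A = Q * (1 + B)" using e1 e3 unfolding Q_def by (simp add: algebra_simps)
  have "A * (1 - Pe) = Q * (1 + (B - Pe - Me))" using e6 unfolding A_eq by (simp add: algebra_simps)
  hence A_Pe: "A - A * Pe = Q" using e2 by (simp add: algebra_simps)
  have "Q - 1 = Pe * A" unfolding Q_def using e5 by simp
  hence Q_eq: "A + 1 = 2 * Q" using A_Pe by (simp add: algebra_simps mult_2)
  have "A * Pe = X * Q * A^2" unfolding e4 Q_def by (simp add: algebra_simps power2_eq_square)
  hence "A - X * Q * A^2 = Q" using A_Pe by simp
  hence "A = Q * (1 + X * A^2)" by (simp add: algebra_simps)
  hence "2 * A = (2 * Q) * (1 + X * A^2)" by (simp add: mult.assoc)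
  hence "2 * A = (A + 1) * (1 + X * A^2)" unfolding Q_eq .
  hence "A + A = A + (1 + X * A^2 + X * A^3)"
    by (simp add: algebra_simps power2_eq_square power3_eq_cube mult_2)
  thus ?thesis by (simp add: add.assoc)
qed

lemma alt_sep_odd_fps_cubic:
  "(alt_sep_odd_fps :: 'a::comm_ring_1 fps) = 1 + fps_X * alt_sep_odd_fps ^ 2 + fps_X * alt_sep_odd_fps ^ 3"
  by (rule cubic_of_system[OF alt_sep_odd_fps_eq alt_sep_even_fps_eq up_odd_fps_eq up_even_fps_eq
        down_odd_fps_eq down_even_fps_eq])

section \<open>Lagrange inversion\<close>

lemma lagrange_kernel_nth:
  fixes \<phi> :: "'a::field_char_0 fps"
  assumes "fps_nth \<phi> 0 \<noteq> 0"
  shows "fps_nth (fps_deriv (fps_X * inverse \<phi>) * \<phi> ^ (j + 1)) j = (if j = 0 then 1 else 0)"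
proof -
  define V where "V = inverse \<phi>"
  have \<phi>V: "\<phi> * V = 1" unfolding V_def using assms by (rule inverse_mult_eq_1')
  have dV: "fps_deriv V = - fps_deriv \<phi> * V^2" unfolding V_def using assms by (rule fps_inverse_deriv)
  have D: "fps_deriv (fps_X * V) = V + fps_X * fps_deriv V" by (simp add: algebra_simps)
  show ?thesis
  proof (cases j)
    case 0
    have "fps_deriv (fps_X * V) * \<phi> = \<phi> * V + fps_X * (fps_deriv V * \<phi>)"
      unfolding D by (simp add: algebra_simps)
    thus ?thesis using 0 \<phi>V V_def by simp
  next
    case (Suc i)
    have "fps_deriv (fps_X * V) * \<phi>^(j+1) = (\<phi> * V) * \<phi>^j - fps_X * (fps_deriv \<phi> * \<phi>^i) * (\<phi> * V)^2"
      unfolding D dV Suc by (simp add: algebra_simps power2_eq_square)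
    also have "\<dots> = \<phi>^j - fps_X * (fps_deriv \<phi> * \<phi>^i)" using \<phi>V by simp
    finally have e: "fps_deriv (fps_X * V) * \<phi>^(j+1) = \<phi>^j - fps_X * (fps_deriv \<phi> * \<phi>^i)" .
    \<comment> \<open>Both terms have coefficient \<open>[X^i] (\<phi>' \<phi>^i)\<close>, since \<open>(\<phi>^j)' = j \<phi>' \<phi>^i\<close>.\<close>
    have "fps_deriv (\<phi>^j) = of_nat j * (fps_deriv \<phi> * \<phi>^i)"
      unfolding fps_deriv_power' Suc diff_Suc_1 mult.assoc ..
    hence "of_nat (i+1) * fps_nth (\<phi>^j) (i+1) = of_nat j * fps_nth (fps_deriv \<phi> * \<phi>^i) i"
      using fps_deriv_nth[of "\<phi>^j" i] by simp
    hence "fps_nth (\<phi>^j) j = fps_nth (fps_deriv \<phi> * \<phi>^i) i" using Suc of_nat_neq_0[of i] by auto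
    thus ?thesis unfolding V_def[symmetric] e using Suc by (simp add: fps_X_mult_nth)
  qed
qed

lemma fixed_point_compose_eq_fps_X:
  fixes \<phi> F :: "'a::field fps"
  assumes \<phi>0: "fps_nth \<phi> 0 \<noteq> 0" and F: "F = fps_X * (\<phi> oo F)"
  shows "F oo (fps_X * inverse \<phi>) = fps_X"
proof -
  define G where "G = fps_X * inverse \<phi>"
  have F0: "fps_nth F 0 = 0" and F1: "fps_nth F 1 \<noteq> 0"
    by (subst F, simp add: fps_X_mult_nth \<phi>0)+
  have "G oo F = F * inverse (\<phi> oo F)"
    unfolding G_def using F0 \<phi>0 by (simp add: fps_compose_mult_distrib fps_inverse_compose)
  also have "\<dots> = fps_X * (\<phi> oo F) * inverse (\<phi> oo F)"
    by (rule arg_cong[where f = "\<lambda>H. H * inverse (\<phi> oo F)"], rule F)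
  also have "\<dots> = fps_X" using \<phi>0 by (simp add: mult.assoc inverse_mult_eq_1')
  finally have GF: "G oo F = fps_X" .
  have "G = (G oo F) oo fps_inv F"
    using fps_inv_right[OF F0 F1] fps_compose_assoc[of "fps_inv F" F G] F0
    by (simp add: fps_inv_def)
  hence "G = fps_inv F" using GF by (simp add: fps_inv_def)
  thus ?thesis unfolding G_def[symmetric] using fps_inv_right[OF F0 F1] by simp
qed

lemma fps_cutoff_Suc_eq_sum:
  "fps_cutoff (Suc n) F = (\<Sum>m\<le>n. fps_const (fps_nth F m) * fps_X ^ m)"
  by (rule fps_ext) (simp add: fps_sum_nth if_distrib sum.delta less_Suc_eq_le cong: if_cong)

lemma compose_eq_fps_X_deriv_expansion:
  fixes F G :: "'a::idom fps"
  assumes G0: "fps_nth G 0 = 0" and FG: "F oo G = fps_X"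
  obtains R where "(\<Sum>m\<le>n. fps_const (fps_nth F m) * (of_nat m * fps_deriv G * G^(m - 1))) + G^n * R = 1"
proof -
  define S where "S = fps_shift (Suc n) F"
  define K where "K = S oo G"
  have "fps_X = (fps_X ^ Suc n * S + fps_cutoff (Suc n) F) oo G"
    unfolding S_def fps_shift_cutoff' FG ..
  also have "\<dots> = (\<Sum>m\<le>n. fps_const (fps_nth F m) * G ^ m) + G ^ Suc n * K"
    unfolding K_def fps_cutoff_Suc_eq_sum using G0
    by (simp add: fps_compose_sum_distrib fps_compose_add_distrib fps_compose_mult_distrib fps_X_power_compose)
  finally have "1 = fps_deriv ((\<Sum>m\<le>n. fps_const (fps_nth F m) * G ^ m) + G ^ Suc n * K)"
    by simp
  also have "\<dots> = (\<Sum>m\<le>n. fps_const (fps_nth F m) * (of_nat m * fps_deriv G * G^(m - 1)))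
      + G ^ n * (of_nat (Suc n) * fps_deriv G * K + G * fps_deriv K)"
    unfolding fps_deriv_add fps_deriv_sum fps_deriv_mult fps_deriv_power'
    by (simp add: algebra_simps)
  finally show ?thesis using that by simp
qed

lemma lagrange_inversion_term_nth:
  fixes \<phi> :: "'a::field_char_0 fps"
  defines "G \<equiv> fps_X * inverse \<phi>"
  assumes \<phi>0: "fps_nth \<phi> 0 \<noteq> 0" and m: "1 \<le> m" "m \<le> n"
  shows "fps_nth (fps_deriv G * (G^(m - 1) * \<phi>^n)) (n - 1) = (if m = n then 1 else 0)"
proof -
  have "n = (m - 1) + (n - m + 1)" using m by simp
  hence "\<phi>^n = \<phi>^(m - 1) * \<phi>^(n - m + 1)" by (metis power_add)
  hence "G^(m - 1) * \<phi>^n = fps_X^(m - 1) * (inverse \<phi> * \<phi>)^(m - 1) * \<phi>^(n - m + 1)"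
    unfolding G_def power_mult_distrib by (simp add: mult_ac)
  also have "\<dots> = fps_X^(m - 1) * \<phi>^(n - m + 1)" using \<phi>0 by (simp add: inverse_mult_eq_1)
  finally have "fps_nth (fps_deriv G * (G^(m - 1) * \<phi>^n)) (n - 1)
      = fps_nth (fps_X^(m - 1) * (fps_deriv G * \<phi>^(n - m + 1))) (n - 1)"
    by (simp add: algebra_simps)
  also have "\<dots> = fps_nth (fps_deriv G * \<phi>^(n - m + 1)) (n - m)"
    using m by (simp add: fps_X_power_mult_nth)
  also have "\<dots> = (if n - m = 0 then 1 else 0)"
    unfolding G_def by (rule lagrange_kernel_nth[OF \<phi>0])
  finally show ?thesis using m by auto
qed

text \<open>Composing \<open>F\<close> with its compositional inverse \<open>X/\<phi>\<close> and differentiating gives an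
  identity in which only the top truncation term survives in the coefficient of \<open>X^(n-1)\<close>.\<close>

lemma lagrange_inversion:
  fixes \<phi> F :: "'a::field_char_0 fps"
  assumes \<phi>0: "fps_nth \<phi> 0 \<noteq> 0" and F: "F = fps_X * (\<phi> oo F)" and n: "1 \<le> n"
  shows "of_nat n * fps_nth F n = fps_nth (\<phi> ^ n) (n - 1)"
proof -
  define G where "G = fps_X * inverse \<phi>"
  have G0: "fps_nth G 0 = 0" unfolding G_def by simp
  have "F oo G = fps_X" unfolding G_def using \<phi>0 F by (rule fixed_point_compose_eq_fps_X)
  then obtain R where R: "(\<Sum>m\<le>n. fps_const (fps_nth F m) * (of_nat m * fps_deriv G * G^(m - 1))) + G^n * R = 1"
    using compose_eq_fps_X_deriv_expansion[OF G0] by blast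
  have "G^n * \<phi>^n = fps_X^n"
    unfolding G_def power_mult_distrib using \<phi>0
    by (simp add: mult.assoc power_mult_distrib[symmetric] inverse_mult_eq_1)
  hence "\<phi>^n = (\<Sum>m\<le>n. fps_const (fps_nth F m) * of_nat m * (fps_deriv G * (G^(m - 1) * \<phi>^n)))
      + fps_X^n * R"
    using arg_cong[OF R, of "\<lambda>H. \<phi>^n * H"]
    by (simp add: distrib_left sum_distrib_left mult_ac)
  hence "fps_nth (\<phi>^n) (n - 1) = fps_nth ((\<Sum>m\<le>n. fps_const (fps_nth F m) * of_nat m
      * (fps_deriv G * (G^(m - 1) * \<phi>^n))) + fps_X^n * R) (n - 1)"
    by (rule arg_cong)
  also have "\<dots> = (\<Sum>m\<le>n. fps_nth F m * of_nat m * fps_nth (fps_deriv G * (G^(m - 1) * \<phi>^n)) (n - 1))"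
    using n by (simp add: fps_sum_nth fps_X_power_mult_nth mult.assoc)
  also have "\<dots> = (\<Sum>m\<le>n. if m = n then fps_nth F m * of_nat m else 0)"
  proof (intro sum.cong refl)
    fix m assume "m \<in> {..n}"
    thus "fps_nth F m * of_nat m * fps_nth (fps_deriv G * (G^(m - 1) * \<phi>^n)) (n - 1)
        = (if m = n then fps_nth F m * of_nat m else 0)"
      using lagrange_inversion_term_nth[OF \<phi>0, of m n] n unfolding G_def[symmetric]
      by (cases "m = 0") auto
  qed
  finally show ?thesis by (simp add: mult.commute)
qed

lemma fps_nth_const_plus_X_power:
  "fps_nth ((fps_const c + fps_X) ^ k :: 'a::comm_ring_1 fps) i = of_nat (k choose i) * c ^ (k - i)"
proof -
  have "(fps_const c + fps_X) ^ k = (\<Sum>j\<le>k. of_nat (k choose j) * fps_X ^ j * fps_const c ^ (k - j))"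
    by (subst add.commute) (rule binomial_ring)
  also have "\<dots> = (\<Sum>j\<le>k. fps_const (of_nat (k choose j) * c ^ (k - j)) * fps_X ^ j)"
    by (simp add: fps_const_power fps_of_nat[symmetric] fps_const_mult[symmetric] algebra_simps
        del: fps_const_mult)
  finally show ?thesis by (auto simp: fps_sum_nth if_distrib sum.delta binomial_eq_0 not_le cong: if_cong)
qed

lemma cubic_kernel_compose:
  fixes F :: "'a::idom fps"
  assumes "fps_nth F 0 = 0"
  shows "((1 + fps_X)^2 + (1 + fps_X)^3) oo F = (1 + F)^2 + (1 + F)^3"
  using assms by (simp add: fps_compose_add_distrib fps_compose_power[symmetric])

lemma cubic_kernel_power_nth:
  assumes "1 \<le> n"
  shows "fps_nth (((1 + fps_X)^2 + (1 + fps_X)^3) ^ n :: real fps) (n - 1)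
    = 2 * (\<Sum>i = 0..n - 1. 2 ^ i * real ((2 * n) choose i) * real (n choose (i + 1)))"
proof -
  have "(1 + fps_X)^2 + (1 + fps_X)^3 = (fps_const 1 + fps_X)^2 * (fps_const 2 + fps_X :: real fps)"
    by (simp add: power2_eq_square power3_eq_cube algebra_simps numeral_fps_const)
  hence "((1 + fps_X)^2 + (1 + fps_X)^3) ^ n = (fps_const 1 + fps_X)^(2 * n) * (fps_const 2 + fps_X :: real fps)^n"
    by (simp add: power_mult_distrib power_mult)
  hence "fps_nth (((1 + fps_X)^2 + (1 + fps_X)^3) ^ n :: real fps) (n - 1)
      = (\<Sum>i = 0..n - 1. real ((2 * n) choose i) * (real (n choose (n - 1 - i)) * 2 ^ (n - (n - 1 - i))))"
    using fps_nth_const_plus_X_power[of "1::real"] by (simp add: fps_mult_nth fps_nth_const_plus_X_power)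
  also have "\<dots> = (\<Sum>i = 0..n - 1. 2 * (2 ^ i * real ((2 * n) choose i) * real (n choose (i + 1))))"
  proof (rule sum.cong)
    fix i assume "i \<in> {0..n - 1}"
    hence i: "i + 1 \<le> n" using assms by auto
    hence "n choose (n - 1 - i) = n choose (i + 1)" by (metis binomial_symmetric diff_diff_left add.commute)
    moreover have "n - (n - 1 - i) = Suc i" using i by auto
    ultimately show "real ((2 * n) choose i) * (real (n choose (n - 1 - i)) * 2 ^ (n - (n - 1 - i)))
        = 2 * (2 ^ i * real ((2 * n) choose i) * real (n choose (i + 1)))" by simp
  qed simp
  finally show ?thesis by (simp add: sum_distrib_left)
qed

section \<open>Permutations in one-line notation\<close>

definition one_line :: "nat \<Rightarrow> (nat \<Rightarrow> nat) \<Rightarrow> nat list" where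
  "one_line m p = map (\<lambda>i. p (Suc i) - 1) [0..<m]"

lemma length_one_line [simp]: "length (one_line m p) = m"
  unfolding one_line_def by simp

lemma one_line_nth: "i < m \<Longrightarrow> one_line m p ! i = p (Suc i) - 1"
  unfolding one_line_def by simp

lemma order_iso_2413_iff:
  "(\<forall>a<4. \<forall>b<4. (g a :: nat) < g b \<longleftrightarrow> ([2,4,1,3] :: nat list) ! a < [2,4,1,3] ! b)
     \<longleftrightarrow> g 2 < g 0 \<and> g 0 < g 3 \<and> g 3 < g 1"
  by (auto simp: less_Suc_eq numeral_eq_Suc)

lemma order_iso_3142_iff:
  "(\<forall>a<4. \<forall>b<4. (g a :: nat) < g b \<longleftrightarrow> ([3,1,4,2] :: nat list) ! a < [3,1,4,2] ! b)
     \<longleftrightarrow> g 1 < g 3 \<and> g 3 < g 0 \<and> g 0 < g 2"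
  by (auto simp: less_Suc_eq numeral_eq_Suc)

definition pattern_occurrence :: "nat list \<Rightarrow> nat list \<Rightarrow> (nat \<Rightarrow> nat) \<Rightarrow> bool" where
  "pattern_occurrence tau xs g \<longleftrightarrow> strict_mono_on {..<length tau} g \<and> g ` {..<length tau} \<subseteq> {..<length xs} \<and>
     (\<forall>a < length tau. \<forall>b < length tau. xs ! g a < xs ! g b \<longleftrightarrow> tau ! a < tau ! b)"

lemma ex_strict_mono_on_4_iff:
  "(\<exists>g :: nat \<Rightarrow> nat. strict_mono_on {..<4} g \<and> g ` {..<4} \<subseteq> {..<m} \<and> P (g 0) (g 1) (g 2) (g 3)) \<longleftrightarrow>
   (\<exists>i j k l :: nat. i < j \<and> j < k \<and> k < l \<and> l < m \<and> P i j k l)"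
proof
  assume "\<exists>g :: nat \<Rightarrow> nat. strict_mono_on {..<4} g \<and> g ` {..<4} \<subseteq> {..<m} \<and> P (g 0) (g 1) (g 2) (g 3)"
  then obtain g :: "nat \<Rightarrow> nat" where mono: "strict_mono_on {..<4} g" and range: "g ` {..<4} \<subseteq> {..<m}"
    and "P (g 0) (g 1) (g 2) (g 3)" by blast
  moreover have "g 0 < g 1" "g 1 < g 2" "g 2 < g 3" using mono by (simp_all add: strict_mono_onD)
  moreover have "g 3 < m" using range unfolding image_subset_iff by simp
  ultimately show "\<exists>i j k l. i < j \<and> j < k \<and> k < l \<and> l < m \<and> P i j k l" by blast
next
  assume "\<exists>i j k l :: nat. i < j \<and> j < k \<and> k < l \<and> l < m \<and> P i j k l"
  then obtain i j k l :: nat where ijkl: "i < j" "j < k" "k < l" "l < m" and "P i j k l" by blast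
  have "sorted_wrt (<) [i, j, k, l]" using ijkl by simp
  hence "strict_mono_on {..<4} (\<lambda>a. [i, j, k, l] ! a)"
    by (intro strict_mono_onI) (erule sorted_wrt_nth_less; simp)
  moreover have "(\<lambda>a. [i, j, k, l] ! a) ` {..<4} \<subseteq> {..<m}"
  proof
    fix v assume "v \<in> (\<lambda>a. [i, j, k, l] ! a) ` {..<4}"
    hence "v \<in> set [i, j, k, l]" by (auto simp: set_conv_nth)
    thus "v \<in> {..<m}" using ijkl by auto
  qed
  ultimately show "\<exists>g :: nat \<Rightarrow> nat. strict_mono_on {..<4} g \<and> g ` {..<4} \<subseteq> {..<m} \<and> P (g 0) (g 1) (g 2) (g 3)"
    using \<open>P i j k l\<close> by (intro exI[of _ "\<lambda>a. [i, j, k, l] ! a"]) (simp add: numeral_eq_Suc)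
qed

context
  fixes m :: nat and p :: "nat \<Rightarrow> nat"
  assumes p: "p permutes {1..m}"
begin

lemma permutes_value_bounds: "1 \<le> x \<Longrightarrow> x \<le> m \<Longrightarrow> 1 \<le> p x \<and> p x \<le> m"
  using permutes_in_image[OF p, of x] by auto

lemma one_line_less_iff:
  "i < m \<Longrightarrow> j < m \<Longrightarrow> one_line m p ! i < one_line m p ! j \<longleftrightarrow> p (Suc i) < p (Suc j)"
  using permutes_value_bounds[of "Suc i"] permutes_value_bounds[of "Suc j"] by (auto simp: one_line_nth)

lemma one_line_permutations: "one_line m p \<in> permutations_of_set {0..<m}"
proof
  have "inj_on (\<lambda>i. p (Suc i) - 1) {0..<m}"
  proof (rule inj_onI)
    fix i j assume "i \<in> {0..<m}" "j \<in> {0..<m}" "p (Suc i) - 1 = p (Suc j) - 1"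
    hence "p (Suc i) = p (Suc j)" using permutes_value_bounds[of "Suc i"] permutes_value_bounds[of "Suc j"] by auto
    thus "i = j" using permutes_inj[OF p] by (auto dest: injD)
  qed
  thus dist: "distinct (one_line m p)" by (simp add: one_line_def distinct_map)
  moreover have "set (one_line m p) \<subseteq> {0..<m}"
  proof
    fix v assume "v \<in> set (one_line m p)"
    then obtain i where "i < m" "v = p (Suc i) - 1" by (auto simp: one_line_def)
    thus "v \<in> {0..<m}" using permutes_value_bounds[of "Suc i"] by auto
  qed
  ultimately show "set (one_line m p) = {0..<m}"
    using card_subset_eq[of "{0..<m}" "set (one_line m p)"] by (simp add: distinct_card)
qed

lemma alternating_iff_one_line: "alternating m p \<longleftrightarrow> alternating_from 0 (one_line m p)"
proof -
  have step: "(if odd i then p i < p (Suc i) else p (Suc i) < p i) \<longleftrightarrow>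
      (one_line m p ! j < one_line m p ! Suc j \<longleftrightarrow> even (j + 0))" if "i = Suc j" "i < m" for i j
  proof -
    have "p i \<noteq> p (Suc i)" using permutes_inj[OF p] by (metis injD n_not_Suc_n)
    hence "p (Suc i) < p i \<longleftrightarrow> \<not> p i < p (Suc i)" by linarith
    thus ?thesis using one_line_less_iff[of j "Suc j"] that by simp
  qed
  show ?thesis
    unfolding alternating_def alternating_from_def length_one_line
  proof (rule iffI; intro allI impI)
    fix j assume alt: "\<forall>i. 1 \<le> i \<and> i < m \<longrightarrow> (if odd i then p i < p (Suc i) else p (Suc i) < p i)"
      and "Suc j < m"
    thus "one_line m p ! j < one_line m p ! Suc j \<longleftrightarrow> even (j + 0)"
      using step[of "Suc j" j] alt[rule_format, of "Suc j"] by simp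
  next
    fix i assume alt: "\<forall>j. Suc j < m \<longrightarrow> (one_line m p ! j < one_line m p ! Suc j \<longleftrightarrow> even (j + 0))"
      and i: "1 \<le> i \<and> i < m"
    then obtain j where "i = Suc j" by (cases i) auto
    thus "if odd i then p i < p (Suc i) else p (Suc i) < p i" using alt step[of i j] i by simp
  qed
qed

lemma contains_pattern_imp_occurrence:
  assumes "contains_pattern m p tau"
  shows "\<exists>g. pattern_occurrence tau (one_line m p) g"
proof -
  obtain f where f: "strict_mono_on {..<length tau} f" "f ` {..<length tau} \<subseteq> {1..m}"
    "\<forall>a < length tau. \<forall>b < length tau. p (f a) < p (f b) \<longleftrightarrow> tau ! a < tau ! b"
    using assms unfolding contains_pattern_def by blast
  have bounds: "1 \<le> f a \<and> f a \<le> m" if "a < length tau" for a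
    using f(2) that unfolding image_subset_iff by simp
  have "pattern_occurrence tau (one_line m p) (\<lambda>a. f a - 1)"
    unfolding pattern_occurrence_def length_one_line
  proof (intro conjI strict_mono_onI allI impI)
    fix a b assume "a \<in> {..<length tau}" "b \<in> {..<length tau}" "a < b"
    moreover from this have "f a < f b" using strict_mono_onD[OF f(1)] by blast
    ultimately show "f a - 1 < f b - 1" using bounds[of a] by auto
  next
    show "(\<lambda>a. f a - 1) ` {..<length tau} \<subseteq> {..<m}"
      unfolding image_subset_iff using bounds by fastforce
  next
    fix a b assume ab: "a < length tau" "b < length tau"
    hence "f a - 1 < m" "f b - 1 < m" and shift: "Suc (f a - 1) = f a" "Suc (f b - 1) = f b"
      using bounds[of a] bounds[of b] by auto
    hence "one_line m p ! (f a - 1) < one_line m p ! (f b - 1) \<longleftrightarrow> p (f a) < p (f b)"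
      using one_line_less_iff[of "f a - 1" "f b - 1"] by (simp only: shift)
    thus "one_line m p ! (f a - 1) < one_line m p ! (f b - 1) \<longleftrightarrow> tau ! a < tau ! b"
      using f(3) ab by simp
  qed
  thus ?thesis by blast
qed

lemma occurrence_imp_contains_pattern:
  assumes "pattern_occurrence tau (one_line m p) g"
  shows "contains_pattern m p tau"
proof -
  have mono: "strict_mono_on {..<length tau} g" and range: "g ` {..<length tau} \<subseteq> {..<m}"
    and order: "\<forall>a < length tau. \<forall>b < length tau. one_line m p ! g a < one_line m p ! g b \<longleftrightarrow> tau ! a < tau ! b"
    using assms by (simp_all add: pattern_occurrence_def)
  have "strict_mono_on {..<length tau} (\<lambda>a. Suc (g a))"
    by (intro strict_mono_onI) (simp add: strict_mono_onD[OF mono])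
  moreover have "(\<lambda>a. Suc (g a)) ` {..<length tau} \<subseteq> {1..m}"
    using range unfolding image_subset_iff by (simp add: Suc_le_eq)
  moreover have "\<forall>a < length tau. \<forall>b < length tau. p (Suc (g a)) < p (Suc (g b)) \<longleftrightarrow> tau ! a < tau ! b"
  proof (intro allI impI)
    fix a b assume ab: "a < length tau" "b < length tau"
    hence "g a < m" "g b < m" using range unfolding image_subset_iff by simp_all
    thus "p (Suc (g a)) < p (Suc (g b)) \<longleftrightarrow> tau ! a < tau ! b"
      using one_line_less_iff[of "g a" "g b"] order ab by simp
  qed
  ultimately show ?thesis unfolding contains_pattern_def by blast
qed

lemma contains_pattern_iff_occurrence:
  "contains_pattern m p tau \<longleftrightarrow> (\<exists>g. pattern_occurrence tau (one_line m p) g)"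
  using contains_pattern_imp_occurrence occurrence_imp_contains_pattern by blast

lemma separable_one_line_iff:
  "separable (one_line m p) \<longleftrightarrow> \<not> contains_pattern m p [2,4,1,3] \<and> \<not> contains_pattern m p [3,1,4,2]"
proof -
  let ?x = "one_line m p"
  have len: "length [2,4,1,3::nat] = 4" "length [3,1,4,2::nat] = 4" by simp_all
  have "contains_pattern m p [2,4,1,3] \<longleftrightarrow> (\<exists>g :: nat \<Rightarrow> nat. strict_mono_on {..<4} g \<and> g ` {..<4} \<subseteq> {..<m} \<and>
      (\<forall>a<4. \<forall>b<4. ?x ! g a < ?x ! g b \<longleftrightarrow> [2,4,1,3::nat] ! a < [2,4,1,3] ! b))"
    unfolding contains_pattern_iff_occurrence pattern_occurrence_def length_one_line len ..
  also have "\<dots> \<longleftrightarrow> (\<exists>g :: nat \<Rightarrow> nat. strict_mono_on {..<4} g \<and> g ` {..<4} \<subseteq> {..<m} \<and>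
      (\<lambda>i j k l. ?x ! k < ?x ! i \<and> ?x ! i < ?x ! l \<and> ?x ! l < ?x ! j) (g 0) (g 1) (g 2) (g 3))"
    by (simp only: order_iso_2413_iff)
  also have "\<dots> \<longleftrightarrow> (\<exists>i j k l. i < j \<and> j < k \<and> k < l \<and> l < m \<and>
      ?x ! k < ?x ! i \<and> ?x ! i < ?x ! l \<and> ?x ! l < ?x ! j)"
    by (rule ex_strict_mono_on_4_iff)
  finally have c2413: "contains_pattern m p [2,4,1,3] \<longleftrightarrow> \<dots>" .
  have "contains_pattern m p [3,1,4,2] \<longleftrightarrow> (\<exists>g :: nat \<Rightarrow> nat. strict_mono_on {..<4} g \<and> g ` {..<4} \<subseteq> {..<m} \<and>
      (\<forall>a<4. \<forall>b<4. ?x ! g a < ?x ! g b \<longleftrightarrow> [3,1,4,2::nat] ! a < [3,1,4,2] ! b))"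
    unfolding contains_pattern_iff_occurrence pattern_occurrence_def length_one_line len ..
  also have "\<dots> \<longleftrightarrow> (\<exists>g :: nat \<Rightarrow> nat. strict_mono_on {..<4} g \<and> g ` {..<4} \<subseteq> {..<m} \<and>
      (\<lambda>i j k l. ?x ! j < ?x ! l \<and> ?x ! l < ?x ! i \<and> ?x ! i < ?x ! k) (g 0) (g 1) (g 2) (g 3))"
    by (simp only: order_iso_3142_iff)
  also have "\<dots> \<longleftrightarrow> (\<exists>i j k l. i < j \<and> j < k \<and> k < l \<and> l < m \<and>
      ?x ! j < ?x ! l \<and> ?x ! l < ?x ! i \<and> ?x ! i < ?x ! k)"
    by (rule ex_strict_mono_on_4_iff)
  finally have c3142: "contains_pattern m p [3,1,4,2] \<longleftrightarrow> \<dots>" .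
  show ?thesis unfolding c2413 c3142 separable_def length_one_line by blast
qed

lemma Alt_avoid_iff_one_line: "p \<in> Alt_avoid m \<longleftrightarrow> one_line m p \<in> alt_sep 0 m"
  unfolding Alt_avoid_def alt_sep_def
  using p one_line_permutations alternating_iff_one_line separable_one_line_iff by simp

end

lemma inj_on_one_line: "inj_on (one_line m) {p. p permutes {1..m}}"
proof (rule inj_onI)
  fix p q assume p: "p \<in> {p. p permutes {1..m}}" and q: "q \<in> {p. p permutes {1..m}}"
    and eq: "one_line m p = one_line m q"
  show "p = q"
  proof
    fix x show "p x = q x"
    proof (cases "x \<in> {1..m}")
      case True
      hence "x - 1 < m" by auto
      hence "p x - 1 = q x - 1"
        using True arg_cong[OF eq, of "\<lambda>xs. xs ! (x - 1)"] one_line_nth[of "x - 1" m p] one_line_nth[of "x - 1" m q]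
        by simp
      moreover have "1 \<le> p x" "1 \<le> q x"
        using True permutes_value_bounds[of p m x] permutes_value_bounds[of q m x] p q by auto
      ultimately show ?thesis by simp
    next
      case False
      thus ?thesis using permutes_not_in[of p "{1..m}" x] permutes_not_in[of q "{1..m}" x] p q by simp
    qed
  qed
qed

lemma one_line_image_permutes: "one_line m ` {p. p permutes {1..m}} = permutations_of_set {0..<m}"
proof (rule card_subset_eq)
  show "one_line m ` {p. p permutes {1..m}} \<subseteq> permutations_of_set {0..<m}"
    using one_line_permutations by blast
  have "card (one_line m ` {p. p permutes {1..m}}) = card {p. p permutes {1..m}}"
    by (rule card_image[OF inj_on_one_line])
  also have "\<dots> = fact m" by (rule card_permutations) simp_all
  finally show "card (one_line m ` {p. p permutes {1..m}}) = card (permutations_of_set {0..<m})" by simp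
qed simp

lemma card_Alt_avoid: "card (Alt_avoid m) = alt_sep_count m"
proof -
  have "one_line m ` Alt_avoid m = alt_sep 0 m"
  proof
    show "one_line m ` Alt_avoid m \<subseteq> alt_sep 0 m"
      using Alt_avoid_iff_one_line by (auto simp: Alt_avoid_def)
    show "alt_sep 0 m \<subseteq> one_line m ` Alt_avoid m"
    proof
      fix xs assume xs: "xs \<in> alt_sep 0 m"
      then obtain p where "p permutes {1..m}" "xs = one_line m p"
        using one_line_image_permutes[of m] by (auto simp: alt_sep_def)
      thus "xs \<in> one_line m ` Alt_avoid m" using xs Alt_avoid_iff_one_line by blast
    qed
  qed
  moreover have "inj_on (one_line m) (Alt_avoid m)"
    using inj_on_one_line by (rule inj_on_subset) (auto simp: Alt_avoid_def)
  ultimately show ?thesis unfolding alt_sep_count_def by (metis card_image)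
qed

lemma r_seq_eq: "r_seq n = alt_sep_count (2 * n + 1)"
  unfolding r_seq_def by (rule card_Alt_avoid)

lemma R_fps_eq: "R_fps = alt_sep_odd_fps - 1"
  by (rule fps_ext) (simp add: R_fps_def alt_sep_odd_fps_def r_seq_eq alt_sep_count_Suc_0)

theorem theorem6p1:
  shows "R_fps = fps_X * (R_fps + 1) ^ 2 + fps_X * (R_fps + 1) ^ 3
    \<and> r_seq 0 = 1
    \<and> (\<forall>n \<ge> 1. real (r_seq n) =
          2 / real n * (\<Sum>i = 0..n - 1. 2 ^ i * real ((2 * n) choose i) * real (n choose (i + 1))))"
proof (intro conjI allI impI)
  show "R_fps = fps_X * (R_fps + 1) ^ 2 + fps_X * (R_fps + 1) ^ 3"
    using alt_sep_odd_fps_cubic[where 'a = int] unfolding R_fps_eq by (simp add: algebra_simps)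
  show "r_seq 0 = 1" by (simp add: r_seq_eq alt_sep_count_Suc_0)
  fix n :: nat assume n: "1 \<le> n"
  define F :: "real fps" where "F = alt_sep_odd_fps - 1"
  have "fps_nth F 0 = 0" by (simp add: F_def alt_sep_odd_fps_def alt_sep_count_Suc_0)
  hence "((1 + fps_X)^2 + (1 + fps_X)^3) oo F = (1 + F)^2 + (1 + F)^3" by (rule cubic_kernel_compose)
  moreover have "F = fps_X * ((1 + F)^2 + (1 + F)^3)"
    using alt_sep_odd_fps_cubic[where 'a = real] by (simp add: F_def algebra_simps)
  ultimately have "F = fps_X * (((1 + fps_X)^2 + (1 + fps_X)^3) oo F)" by simp
  hence "real n * fps_nth F n = fps_nth (((1 + fps_X)^2 + (1 + fps_X)^3) ^ n) (n - 1)"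
    using n by (intro lagrange_inversion) (simp_all add: fps_nth_power_0)
  also have "\<dots> = 2 * (\<Sum>i = 0..n - 1. 2 ^ i * real ((2 * n) choose i) * real (n choose (i + 1)))"
    using n by (rule cubic_kernel_power_nth)
  finally show "real (r_seq n) =
      2 / real n * (\<Sum>i = 0..n - 1. 2 ^ i * real ((2 * n) choose i) * real (n choose (i + 1)))"
    using n by (simp add: F_def alt_sep_odd_fps_def r_seq_eq field_simps)
qed

end
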